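(* Let $\mathcal{R}^*=\{z\in\mathbb{C}: z\ne n\pi i,\ n\in\mathbb{Z}\}$. There exist real-valued functions $C_1(x,y,t),C_2(t),C_3(t)\ge0$ ($x,y\in\mathbb{R}$, $t\in\mathcal{R}^*$), bounded on compact subsets of $\mathcal{R}^*$, such that for every $\lambda\in\mathbb{Z}_{\ge1}$ and $t\in\mathcal{R}^*$, \[ |\theta_\lambda(x,y,\boldsymbol\mu_\lambda,t)|\le\Big|\frac{\sqrt2 g}{1-e^{-2t}}\Big|C_1(x,y,t),\quad |\psi^\pm_\lambda(\boldsymbol\mu_\lambda,t)|\le\Big|\frac{2g^2}{1-e^{-2t}}\Big|C_2(t),\quad |\xi_\lambda(\boldsymbol\mu_\lambda,t)|\le\Big|\frac{2g^2}{1-e^{-2t}}\Big|C_3(t)\,\lambda, \] uniformly for $0\le\mu_1\le\mu_2\le\cdots\le\mu_\lambda\le1$.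
   Context: $g\in\mathbb{R}$ is fixed. For $\boldsymbol\mu_\lambda=(\mu_1,\dots,\mu_\lambda)$ and with the convention $\mu_0=0$: \[ \theta_\lambda(x,y,\boldsymbol\mu_\lambda,t)=\frac{2\sqrt2 g}{\sinh t}(x\cosh t-y)\frac{1-(-1)^\lambda}2-\sqrt2 g(x-y)\coth(\tfrac t2)+\frac{2\sqrt2 g(-1)^\lambda}{\sinh t}\sum_{\gamma=0}^\lambda(-1)^\gamma\big[x\cosh(t(1-\mu_\gamma))-y\cosh(t\mu_\gamma)\big], \] \[ \xi_\lambda(\boldsymbol\mu_\lambda,t)=-\frac{8g^2}{\sinh t}\sinh^2\!\big(\tfrac12t(1-\mu_\lambda)\big)(-1)^\lambda\sum_{\gamma=0}^\lambda(-1)^\gamma\cosh(t\mu_\gamma)-\frac{4g^2}{\sinh t}\sum_{\substack{0\le\alpha<\beta\le\lambda-1\\\beta-\alpha\ \mathrm{odd}}}\big(\cosh(t(\mu_{\beta+1}-1))-\cosh(t(\mu_\beta-1))\big)\big(\cosh(t\mu_\alpha)-\cosh(t\mu_{\alpha+1})\big), \] \[ \psi^-_\lambda(\boldsymbol\mu_\lambda,t)=\frac{4g^2}{\sinh t}\Big[\sum_{\gamma=0}^\lambda(-1)^\gamma\sinh\big(t(\tfrac12-\mu_\gamma)\big)\Big]^2,\qquad \psi^+_\lambda(\boldsymbol\mu_\lambda,t)=\frac{4g^2}{\sinh t}\Big[\sum_{\gamma=0}^\lambda(-1)^\gamma\cosh\big(t(\tfrac12-\mu_\gamma)\big)\Big]^2.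 \] *)

theory Defs
  imports "HOL-Analysis.Analysis"
begin

definition Rstar :: "complex set" where
  "Rstar = {z. \<forall>n::int. z \<noteq> of_int n * complex_of_real pi * \<i>}"

text \<open>Sequences mu are functions nat => real; only mu 1 .. mu lambda matter,
  and the convention mu_0 = 0 is enforced by overriding the value at 0.\<close>
definition mu0 :: "(nat \<Rightarrow> real) \<Rightarrow> nat \<Rightarrow> real" where
  "mu0 \<mu> = \<mu>(0 := 0)"

definition theta :: "real \<Rightarrow> nat \<Rightarrow> real \<Rightarrow> real \<Rightarrow> (nat \<Rightarrow> real) \<Rightarrow> complex \<Rightarrow> complex" where
  "theta g lam x y \<mu> t =
     2 * of_real (sqrt 2 * g) / sinh t * (of_real x * cosh t - of_real y) * ((1 - (-1)^lam) / 2)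
     - of_real (sqrt 2 * g * (x - y)) * (cosh (t/2) / sinh (t/2))
     + 2 * of_real (sqrt 2 * g) * (-1)^lam / sinh t *
       (\<Sum>\<gamma>=0..lam. (-1)^\<gamma> * (of_real x * cosh (t * of_real (1 - mu0 \<mu> \<gamma>))
                                  - of_real y * cosh (t * of_real (mu0 \<mu> \<gamma>))))"

definition xi :: "real \<Rightarrow> nat \<Rightarrow> (nat \<Rightarrow> real) \<Rightarrow> complex \<Rightarrow> complex" where
  "xi g lam \<mu> t =
     - of_real (8 * g^2) / sinh t * (sinh (t * of_real (1 - mu0 \<mu> lam) / 2))^2 * (-1)^lam
         * (\<Sum>\<gamma>=0..lam. (-1)^\<gamma> * cosh (t * of_real (mu0 \<mu> \<gamma>)))
     - of_real (4 * g^2) / sinh t *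
       (\<Sum>(\<alpha>,\<beta>)\<in>{(\<alpha>,\<beta>). \<alpha> < \<beta> \<and> \<beta> \<le> lam - 1 \<and> odd (\<beta> - \<alpha>)}.
          (cosh (t * of_real (mu0 \<mu> (\<beta>+1) - 1)) - cosh (t * of_real (mu0 \<mu> \<beta> - 1)))
          * (cosh (t * of_real (mu0 \<mu> \<alpha>)) - cosh (t * of_real (mu0 \<mu> (\<alpha>+1)))))"

definition psi_minus :: "real \<Rightarrow> nat \<Rightarrow> (nat \<Rightarrow> real) \<Rightarrow> complex \<Rightarrow> complex" where
  "psi_minus g lam \<mu> t = of_real (4 * g^2) / sinh t *
     (\<Sum>\<gamma>=0..lam. (-1)^\<gamma> * sinh (t * of_real (1/2 - mu0 \<mu> \<gamma>)))^2"

definition psi_plus :: "real \<Rightarrow> nat \<Rightarrow> (nat \<Rightarrow> real) \<Rightarrow> complex \<Rightarrow> complex" where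
  "psi_plus g lam \<mu> t = of_real (4 * g^2) / sinh t *
     (\<Sum>\<gamma>=0..lam. (-1)^\<gamma> * cosh (t * of_real (1/2 - mu0 \<mu> \<gamma>)))^2"

definition admissible :: "nat \<Rightarrow> (nat \<Rightarrow> real) \<Rightarrow> bool" where
  "admissible lam \<mu> \<longleftrightarrow> 0 \<le> \<mu> 1 \<and> \<mu> lam \<le> 1 \<and> (\<forall>i. 1 \<le> i \<and> i < lam \<longrightarrow> \<mu> i \<le> \<mu> (Suc i))"

definition bdd_on_compacts :: "(complex \<Rightarrow> real) \<Rightarrow> bool" where
  "bdd_on_compacts f \<longleftrightarrow> (\<forall>K. compact K \<and> K \<subseteq> Rstar \<longrightarrow> (\<exists>B. \<forall>t\<in>K. \<bar>f t\<bar> \<le> B))"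

end

theory Submission
  imports Defs
begin

text \<open>
  For \<open>|z| \<le> 1\<close> the functions \<open>cosh (t z)\<close> and \<open>sinh (t z)\<close> are bounded by \<open>e\<^bsup>|t|\<^esup>\<close>
  and Lipschitz with constant \<open>|t| e\<^bsup>|t|\<^esup>\<close>. Along an admissible sequence
  \<open>0 = \<mu>\<^sub>0 \<le> \<mu>\<^sub>1 \<le> \<dots> \<le> \<mu>\<^sub>\<lambda> \<le> 1\<close>, an alternating sum \<open>\<Sum> (-1)\<^sup>\<gamma> f(\<mu>\<^sub>\<gamma>)\<close> splits into
  differences of \<open>f\<close> at consecutive points plus at most one unpaired term, so it is bounded by
  the Lipschitz constant plus the supremum of \<open>f\<close>, independently of \<open>\<lambda>\<close>. The double sum in
  \<open>\<xi>\<close> is bounded by the product of two sums of increments, each telescoping to at most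
  \<open>|t| e\<^bsup>|t|\<^esup>\<close>. Hence each of the four functions is bounded by its prefactor times a
  majorant that is continuous on \<open>R*\<close>, where \<open>sinh t\<close> and \<open>sinh (t/2)\<close> do not vanish;
  multiplying the majorants by \<open>|1 - e\<^bsup>-2t\<^esup>|\<close> gives the constants. In particular \<open>\<xi>\<close> is
  bounded uniformly in \<open>\<lambda>\<close>.
\<close>

lemma exp_double_ne_1_on_Rstar:
  assumes "t \<in> Rstar"
  shows "exp (2 * t) \<noteq> 1"
proof
  assume "exp (2 * t) = 1"
  then obtain n :: int where "Re t = 0" "Im (2 * t) = of_int (2 * n) * pi"
    by (auto simp: exp_eq_1)
  then have "t = of_int n * complex_of_real pi * \<i>"
    by (simp add: complex_eq_iff)
  with assms show False
    by (auto simp: Rstar_def)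
qed

lemma sinh_nonzero_on_Rstar:
  assumes "t \<in> Rstar"
  shows "sinh t \<noteq> 0"
proof
  assume "sinh t = 0"
  then have "exp t \<in> {1, -1}"
    by (simp add: sinh_zero_iff)
  moreover have "exp (2 * t) = exp t * exp t"
    by (simp only: mult_2 exp_add)
  ultimately show False
    using exp_double_ne_1_on_Rstar[OF assms] by auto
qed

lemma sinh_half_nonzero_on_Rstar:
  assumes "t \<in> Rstar"
  shows "sinh (t / 2) \<noteq> 0"
  using sinh_nonzero_on_Rstar[OF assms] sinh_double[of "t / 2"] by auto

lemma one_minus_exp_neg_double_nonzero_on_Rstar:
  assumes "t \<in> Rstar"
  shows "1 - exp (-2 * t) \<noteq> 0"
  using exp_double_ne_1_on_Rstar[OF assms] by (auto simp: exp_minus field_simps)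

lemma norm_exp_scaled_le:
  assumes "cmod z \<le> 1"
  shows "cmod (exp (t * z)) \<le> exp (cmod t)"
proof -
  have "cmod (t * z) \<le> cmod t"
    using assms by (simp add: norm_mult mult_left_le)
  then show ?thesis
    using norm_exp[of "t * z"] by simp
qed

lemma norm_cosh_scaled_le:
  assumes "cmod z \<le> 1"
  shows "cmod (cosh (t * z)) \<le> exp (cmod t)"
proof -
  have "cmod (cosh (t * z)) = cmod (exp (t * z) + exp ((- t) * z)) / 2"
    by (simp add: cosh_def)
  also have "\<dots> \<le> (cmod (exp (t * z)) + cmod (exp ((- t) * z))) / 2"
    by (intro divide_right_mono norm_triangle_ineq) simp
  also have "\<dots> \<le> exp (cmod t)"
    using norm_exp_scaled_le[OF assms, of t] norm_exp_scaled_le[OF assms, of "- t"]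
    unfolding norm_minus_cancel by argo
  finally show ?thesis .
qed

lemma norm_sinh_scaled_le:
  assumes "cmod z \<le> 1"
  shows "cmod (sinh (t * z)) \<le> exp (cmod t)"
proof -
  have "cmod (sinh (t * z)) = cmod (exp (t * z) - exp ((- t) * z)) / 2"
    by (simp add: sinh_def)
  also have "\<dots> \<le> (cmod (exp (t * z)) + cmod (exp ((- t) * z))) / 2"
    by (intro divide_right_mono norm_triangle_ineq4) simp
  also have "\<dots> \<le> exp (cmod t)"
    using norm_exp_scaled_le[OF assms, of t] norm_exp_scaled_le[OF assms, of "- t"]
    unfolding norm_minus_cancel by argo
  finally show ?thesis .
qed

lemma norm_diff_le_of_deriv_bound:
  fixes f f' :: "complex \<Rightarrow> complex"
  assumes "\<And>z. cmod z \<le> 1 \<Longrightarrow> (f has_field_derivative f' z) (at z)"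
    and "\<And>z. cmod z \<le> 1 \<Longrightarrow> cmod (f' z) \<le> B"
    and "\<bar>a\<bar> \<le> 1" "\<bar>b\<bar> \<le> 1"
  shows "cmod (f (of_real a) - f (of_real b)) \<le> B * \<bar>a - b\<bar>"
proof -
  have "cmod (f (of_real a) - f (of_real b)) \<le> B * cmod (of_real a - of_real b :: complex)"
    by (rule field_differentiable_bound[of "cball 0 1"])
       (use assms in \<open>auto intro: has_field_derivative_at_within\<close>)
  then show ?thesis
    by (simp flip: of_real_diff)
qed

lemma cosh_scaled_lipschitz:
  assumes "\<bar>a\<bar> \<le> 1" "\<bar>b\<bar> \<le> 1"
  shows "cmod (cosh (t * of_real a) - cosh (t * of_real b)) \<le> cmod t * exp (cmod t) * \<bar>a - b\<bar>"
  using assms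
  by (intro norm_diff_le_of_deriv_bound[where f = "\<lambda>z. cosh (t * z)" and f' = "\<lambda>z. t * sinh (t * z)"])
     (auto intro!: derivative_eq_intros mult_left_mono norm_sinh_scaled_le simp: norm_mult)

lemma sinh_scaled_lipschitz:
  assumes "\<bar>a\<bar> \<le> 1" "\<bar>b\<bar> \<le> 1"
  shows "cmod (sinh (t * of_real a) - sinh (t * of_real b)) \<le> cmod t * exp (cmod t) * \<bar>a - b\<bar>"
  using assms
  by (intro norm_diff_le_of_deriv_bound[where f = "\<lambda>z. sinh (t * z)" and f' = "\<lambda>z. t * cosh (t * z)"])
     (auto intro!: derivative_eq_intros mult_left_mono norm_cosh_scaled_le simp: norm_mult)

lemma sum_norm_le_of_increments:
  fixes m :: "nat \<Rightarrow> real" and F :: "nat \<Rightarrow> 'a::real_normed_vector"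
  assumes "\<And>i. i < n \<Longrightarrow> norm (F i) \<le> L * (m (Suc i) - m i)"
    and "0 \<le> m 0" "m n \<le> 1" "0 \<le> L"
  shows "(\<Sum>i<n. norm (F i)) \<le> L"
proof -
  have "(\<Sum>i<n. norm (F i)) \<le> (\<Sum>i<n. L * (m (Suc i) - m i))"
    by (rule sum_mono) (use assms in auto)
  also have "\<dots> = L * (m n - m 0)"
    by (simp add: sum_distrib_left[symmetric] sum_lessThan_telescope)
  also have "\<dots> \<le> L"
    using assms(2-4) by (simp add: mult_left_le)
  finally show ?thesis .
qed

lemma norm_alternating_sum_le:
  fixes f :: "real \<Rightarrow> 'a::real_normed_algebra_1" and m :: "nat \<Rightarrow> real"
  assumes mono: "\<And>i. i < n \<Longrightarrow> m i \<le> m (Suc i)"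
    and range: "\<And>i. i \<le> n \<Longrightarrow> m i \<in> {0..1}"
    and lipschitz: "\<And>a b. a \<in> {0..1} \<Longrightarrow> b \<in> {0..1} \<Longrightarrow> norm (f a - f b) \<le> L * \<bar>a - b\<bar>"
    and bound: "\<And>a. a \<in> {0..1} \<Longrightarrow> norm (f a) \<le> M"
    and "0 \<le> L"
  shows "norm (\<Sum>\<gamma>=0..n. (-1)^\<gamma> * f (m \<gamma>)) \<le> L + M"
proof -
  define S where "S k = (\<Sum>\<gamma>=0..k. (-1)^\<gamma> * f (m \<gamma>))" for k
  \<comment> \<open>Once the last term of a partial sum with even upper index is removed, the terms
      pair off into differences f (m (2j)) - f (m (2j+1)), each bounded by L times an increment of m.\<close>
  define R where "R k = S k - (if even k then f (m k) else 0)" for k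
  have increment: "norm (R (Suc k) - R k) \<le> L * (m (Suc k) - m k)" if "k < n" for k
  proof (cases "even k")
    case True
    have "R (Suc k) - R k = f (m k) - f (m (Suc k))"
      using True by (simp add: R_def S_def)
    then show ?thesis
      using lipschitz[of "m k" "m (Suc k)"] range[of k] range[of "Suc k"] mono[OF that] that
      by simp
  next
    case False
    then have "R (Suc k) - R k = 0"
      by (simp add: R_def S_def)
    then show ?thesis
      using mono[OF that] \<open>0 \<le> L\<close> by simp
  qed
  have "(\<Sum>k<n. norm (R (Suc k) - R k)) \<le> L"
    by (rule sum_norm_le_of_increments[where m = m])
       (use increment range[of 0] range[of n] \<open>0 \<le> L\<close> in auto)
  moreover have "R n = (\<Sum>k<n. R (Suc k) - R k)"
    unfolding sum_lessThan_telescope by (simp add: R_def S_def)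
  ultimately have "norm (R n) \<le> L"
    using norm_sum order_trans by metis
  moreover have "norm (if even n then f (m n) else 0) \<le> M"
    using bound[of "m n"] range[of n] order_trans[OF norm_ge_zero bound[of 0]] by auto
  ultimately have "norm (R n) + norm (if even n then f (m n) else 0) \<le> L + M"
    by linarith
  then show ?thesis
    using norm_triangle_ineq[of "R n" "if even n then f (m n) else 0"] by (simp add: R_def S_def)
qed

lemma admissible_mu0_mono:
  assumes "admissible lam \<mu>" "i < lam"
  shows "mu0 \<mu> i \<le> mu0 \<mu> (Suc i)"
  using assms by (auto simp: admissible_def mu0_def)

lemma admissible_mu0_range:
  assumes "admissible lam \<mu>" "i \<le> lam"
  shows "mu0 \<mu> i \<in> {0..1}"
proof -
  have mono: "mu0 \<mu> i \<le> mu0 \<mu> j" if "i \<le> j" "j \<le> lam" for i j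
    using that
  proof (induction j rule: dec_induct)
    case (step j)
    then show ?case
      using admissible_mu0_mono[OF assms(1), of j] by simp
  qed simp
  have "0 \<le> mu0 \<mu> i"
    using mono[of 1 i] assms by (cases "i = 0") (auto simp: mu0_def admissible_def)
  moreover have "mu0 \<mu> i \<le> 1"
    using mono[of i lam] assms by (cases "lam = 0") (auto simp: mu0_def admissible_def)
  ultimately show ?thesis
    by simp
qed

lemma norm_sum_pairs_le:
  fixes A B :: "nat \<Rightarrow> 'a::real_normed_algebra"
  assumes "P \<subseteq> {..<n} \<times> {..<n}"
  shows "norm (\<Sum>(\<alpha>, \<beta>)\<in>P. A \<beta> * B \<alpha>) \<le> (\<Sum>\<beta><n. norm (A \<beta>)) * (\<Sum>\<alpha><n. norm (B \<alpha>))"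
proof -
  have "norm (\<Sum>(\<alpha>, \<beta>)\<in>P. A \<beta> * B \<alpha>) \<le> (\<Sum>(\<alpha>, \<beta>)\<in>P. norm (A \<beta>) * norm (B \<alpha>))"
    by (rule order_trans[OF norm_sum]) (auto intro: sum_mono norm_mult_ineq)
  also have "\<dots> \<le> (\<Sum>(\<alpha>, \<beta>)\<in>{..<n} \<times> {..<n}. norm (A \<beta>) * norm (B \<alpha>))"
    by (rule sum_mono2) (use assms in auto)
  also have "\<dots> = (\<Sum>\<beta><n. norm (A \<beta>)) * (\<Sum>\<alpha><n. norm (B \<alpha>))"
    by (simp add: sum.cartesian_product sum_distrib_left sum_distrib_right)
  finally show ?thesis .
qed

lemma norm_linear_combination_le:
  fixes u v :: complex
  assumes "cmod u \<le> B" "cmod v \<le> B"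
  shows "cmod (of_real x * u - of_real y * v) \<le> (\<bar>x\<bar> + \<bar>y\<bar>) * B"
proof -
  have "cmod (of_real x * u - of_real y * v) \<le> \<bar>x\<bar> * cmod u + \<bar>y\<bar> * cmod v"
    using norm_triangle_ineq4[of "of_real x * u" "of_real y * v"] by (simp add: norm_mult)
  also have "\<dots> \<le> \<bar>x\<bar> * B + \<bar>y\<bar> * B"
    using assms by (intro add_mono mult_left_mono) auto
  finally show ?thesis
    by (simp add: distrib_right)
qed

definition theta_majorant :: "real \<Rightarrow> real \<Rightarrow> complex \<Rightarrow> real" where
  "theta_majorant x y t =
     2 / cmod (sinh t) * (\<bar>x\<bar> * exp (cmod t) + \<bar>y\<bar> + (\<bar>x\<bar> + \<bar>y\<bar>) * ((cmod t + 1) * exp (cmod t)))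
     + \<bar>x - y\<bar> * cmod (cosh (t / 2)) / cmod (sinh (t / 2))"

definition psi_majorant :: "complex \<Rightarrow> real" where
  "psi_majorant t = 2 / cmod (sinh t) * ((cmod t + 1) * exp (cmod t))\<^sup>2"

definition xi_majorant :: "complex \<Rightarrow> real" where
  "xi_majorant t =
     2 / cmod (sinh t) * (2 * (exp (cmod t))\<^sup>2 * ((cmod t + 1) * exp (cmod t)) + (cmod t * exp (cmod t))\<^sup>2)"

lemma norm_theta_alternating_sum_le:
  assumes "admissible lam \<mu>"
  shows "cmod (\<Sum>\<gamma>=0..lam. (-1)^\<gamma> * (of_real x * cosh (t * of_real (1 - mu0 \<mu> \<gamma>))
                                          - of_real y * cosh (t * of_real (mu0 \<mu> \<gamma>))))
         \<le> (\<bar>x\<bar> + \<bar>y\<bar>) * (cmod t * exp (cmod t)) + (\<bar>x\<bar> + \<bar>y\<bar>) * exp (cmod t)"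
proof (rule norm_alternating_sum_le)
  fix a b :: real
  assume a: "a \<in> {0..1}" and b: "b \<in> {0..1}"
  let ?d1 = "cosh (t * of_real (1 - a)) - cosh (t * of_real (1 - b))"
  let ?d2 = "cosh (t * of_real a) - cosh (t * of_real b)"
  have "cmod ?d1 \<le> cmod t * exp (cmod t) * \<bar>a - b\<bar>"
    using cosh_scaled_lipschitz[of "1 - a" "1 - b" t] a b by (simp add: abs_minus_commute)
  moreover have "cmod ?d2 \<le> cmod t * exp (cmod t) * \<bar>a - b\<bar>"
    using cosh_scaled_lipschitz[of a b t] a b by simp
  ultimately have "cmod (of_real x * ?d1 - of_real y * ?d2)
      \<le> (\<bar>x\<bar> + \<bar>y\<bar>) * (cmod t * exp (cmod t) * \<bar>a - b\<bar>)"
    by (rule norm_linear_combination_le)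
  moreover have "of_real x * ?d1 - of_real y * ?d2
      = (of_real x * cosh (t * of_real (1 - a)) - of_real y * cosh (t * of_real a))
        - (of_real x * cosh (t * of_real (1 - b)) - of_real y * cosh (t * of_real b))"
    by (simp add: algebra_simps)
  ultimately show "cmod ((of_real x * cosh (t * of_real (1 - a)) - of_real y * cosh (t * of_real a))
              - (of_real x * cosh (t * of_real (1 - b)) - of_real y * cosh (t * of_real b)))
         \<le> (\<bar>x\<bar> + \<bar>y\<bar>) * (cmod t * exp (cmod t)) * \<bar>a - b\<bar>"
    by (simp only: mult.assoc)
next
  fix a :: real
  assume a: "a \<in> {0..1}"
  have "cmod (cosh (t * of_real (1 - a))) \<le> exp (cmod t)"
    using a by (intro norm_cosh_scaled_le) (simp del: of_real_diff)
  moreover have "cmod (cosh (t * of_real a)) \<le> exp (cmod t)"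
    using a by (intro norm_cosh_scaled_le) simp
  ultimately show "cmod (of_real x * cosh (t * of_real (1 - a)) - of_real y * cosh (t * of_real a))
         \<le> (\<bar>x\<bar> + \<bar>y\<bar>) * exp (cmod t)"
    by (rule norm_linear_combination_le)
qed (use admissible_mu0_mono[OF assms] admissible_mu0_range[OF assms] in auto)

lemma norm_theta_le:
  assumes "admissible lam \<mu>"
  shows "cmod (theta g lam x y \<mu> t) \<le> \<bar>sqrt 2 * g\<bar> * theta_majorant x y t"
proof -
  let ?T1 = "2 * of_real (sqrt 2 * g) / sinh t * (of_real x * cosh t - of_real y) * ((1 - (-1)^lam) / 2)"
  let ?T2 = "of_real (sqrt 2 * g * (x - y)) * (cosh (t / 2) / sinh (t / 2))"
  let ?S = "\<Sum>\<gamma>=0..lam. (-1)^\<gamma> * (of_real x * cosh (t * of_real (1 - mu0 \<mu> \<gamma>))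
                                  - of_real y * cosh (t * of_real (mu0 \<mu> \<gamma>)))"
  let ?T3 = "2 * of_real (sqrt 2 * g) * (-1)^lam / sinh t * ?S"
  have parity: "cmod ((1 - (-1)^lam) / 2 :: complex) \<le> 1"
    by (cases "even lam") auto
  have "cmod (of_real x * cosh t - of_real y) \<le> \<bar>x\<bar> * cmod (cosh t) + \<bar>y\<bar>"
    using norm_triangle_ineq4[of "of_real x * cosh t" "of_real y"] by (simp add: norm_mult)
  also have "\<dots> \<le> \<bar>x\<bar> * exp (cmod t) + \<bar>y\<bar>"
    using norm_cosh_scaled_le[of 1 t] by (simp add: mult_left_mono)
  finally have cosh_term: "cmod (of_real x * cosh t - of_real y) \<le> \<bar>x\<bar> * exp (cmod t) + \<bar>y\<bar>" .
  have "cmod ?T1 = \<bar>sqrt 2 * g\<bar> * (2 / cmod (sinh t)) * cmod (of_real x * cosh t - of_real y)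
                   * cmod ((1 - (-1)^lam) / 2 :: complex)"
    by (simp add: norm_mult norm_divide del: of_real_mult)
  also have "\<dots> \<le> \<bar>sqrt 2 * g\<bar> * (2 / cmod (sinh t)) * (\<bar>x\<bar> * exp (cmod t) + \<bar>y\<bar>) * 1"
    by (intro mult_mono mult_left_mono cosh_term parity) auto
  finally have T1: "cmod ?T1 \<le> \<bar>sqrt 2 * g\<bar> * (2 / cmod (sinh t)) * (\<bar>x\<bar> * exp (cmod t) + \<bar>y\<bar>)"
    by simp
  have T2: "cmod ?T2 = \<bar>sqrt 2 * g\<bar> * (\<bar>x - y\<bar> * cmod (cosh (t / 2)) / cmod (sinh (t / 2)))"
    by (simp add: norm_mult norm_divide abs_mult del: of_real_mult)
  have "cmod ?T3 = \<bar>sqrt 2 * g\<bar> * (2 / cmod (sinh t)) * cmod ?S"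
    by (simp add: norm_mult norm_divide norm_power del: of_real_mult)
  also have "\<dots> \<le> \<bar>sqrt 2 * g\<bar> * (2 / cmod (sinh t)) * ((\<bar>x\<bar> + \<bar>y\<bar>) * ((cmod t + 1) * exp (cmod t)))"
    using norm_theta_alternating_sum_le[OF assms, of x t y]
    by (intro mult_left_mono) (simp_all add: algebra_simps)
  finally have T3: "cmod ?T3 \<le> \<bar>sqrt 2 * g\<bar> * (2 / cmod (sinh t)) * ((\<bar>x\<bar> + \<bar>y\<bar>) * ((cmod t + 1) * exp (cmod t)))" .
  have "cmod (theta g lam x y \<mu> t) \<le> cmod ?T1 + cmod ?T2 + cmod ?T3"
    unfolding theta_def using norm_triangle_ineq[of "?T1 - ?T2" ?T3] norm_triangle_ineq4[of ?T1 ?T2]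
    by linarith
  also have "\<dots> \<le> \<bar>sqrt 2 * g\<bar> * (2 / cmod (sinh t)) * (\<bar>x\<bar> * exp (cmod t) + \<bar>y\<bar>)
      + \<bar>sqrt 2 * g\<bar> * (\<bar>x - y\<bar> * cmod (cosh (t / 2)) / cmod (sinh (t / 2)))
      + \<bar>sqrt 2 * g\<bar> * (2 / cmod (sinh t)) * ((\<bar>x\<bar> + \<bar>y\<bar>) * ((cmod t + 1) * exp (cmod t)))"
    using T1 T2 T3 by linarith
  also have "\<dots> = \<bar>sqrt 2 * g\<bar> * theta_majorant x y t"
    unfolding theta_majorant_def by (simp add: algebra_simps add_divide_distrib)
  finally show ?thesis .
qed

lemma norm_psi_alternating_sum_le:
  assumes "admissible lam \<mu>" and "h = sinh \<or> h = cosh"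
  shows "cmod (\<Sum>\<gamma>=0..lam. (-1)^\<gamma> * h (t * of_real (1/2 - mu0 \<mu> \<gamma>)))
         \<le> cmod t * exp (cmod t) + exp (cmod t)"
proof (rule norm_alternating_sum_le[where m = "mu0 \<mu>" and f = "\<lambda>a. h (t * of_real (1/2 - a))"])
  fix a b :: real
  assume "a \<in> {0..1}" "b \<in> {0..1}"
  then show "cmod (h (t * of_real (1/2 - a)) - h (t * of_real (1/2 - b))) \<le> cmod t * exp (cmod t) * \<bar>a - b\<bar>"
    using \<open>h = sinh \<or> h = cosh\<close> sinh_scaled_lipschitz[of "1/2 - a" "1/2 - b" t]
      cosh_scaled_lipschitz[of "1/2 - a" "1/2 - b" t]
    by (auto simp: abs_minus_commute)
next
  fix a :: real
  assume "a \<in> {0..1}"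
  then have "cmod (of_real (1/2 - a) :: complex) \<le> 1"
    by (auto simp del: of_real_diff)
  then show "cmod (h (t * of_real (1/2 - a))) \<le> exp (cmod t)"
    using \<open>h = sinh \<or> h = cosh\<close> norm_sinh_scaled_le norm_cosh_scaled_le by blast
qed (use admissible_mu0_mono[OF assms(1)] admissible_mu0_range[OF assms(1)] in auto)

lemma norm_psi_minus_le:
  assumes "admissible lam \<mu>"
  shows "cmod (psi_minus g lam \<mu> t) \<le> 2 * g\<^sup>2 * psi_majorant t"
proof -
  have "cmod (psi_minus g lam \<mu> t) = 4 * g\<^sup>2 / cmod (sinh t) *
      (cmod (\<Sum>\<gamma>=0..lam. (-1)^\<gamma> * sinh (t * of_real (1/2 - mu0 \<mu> \<gamma>))))\<^sup>2"
    by (simp add: psi_minus_def norm_mult norm_divide norm_power)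
  also have "\<dots> \<le> 4 * g\<^sup>2 / cmod (sinh t) * (cmod t * exp (cmod t) + exp (cmod t))\<^sup>2"
    using norm_psi_alternating_sum_le[OF assms, of sinh t] by (intro mult_left_mono power_mono) auto
  also have "\<dots> = 2 * g\<^sup>2 * psi_majorant t"
    by (simp add: psi_majorant_def algebra_simps)
  finally show ?thesis .
qed

lemma norm_psi_plus_le:
  assumes "admissible lam \<mu>"
  shows "cmod (psi_plus g lam \<mu> t) \<le> 2 * g\<^sup>2 * psi_majorant t"
proof -
  have "cmod (psi_plus g lam \<mu> t) = 4 * g\<^sup>2 / cmod (sinh t) *
      (cmod (\<Sum>\<gamma>=0..lam. (-1)^\<gamma> * cosh (t * of_real (1/2 - mu0 \<mu> \<gamma>))))\<^sup>2"
    by (simp add: psi_plus_def norm_mult norm_divide norm_power)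
  also have "\<dots> \<le> 4 * g\<^sup>2 / cmod (sinh t) * (cmod t * exp (cmod t) + exp (cmod t))\<^sup>2"
    using norm_psi_alternating_sum_le[OF assms, of cosh t] by (intro mult_left_mono power_mono) auto
  also have "\<dots> = 2 * g\<^sup>2 * psi_majorant t"
    by (simp add: psi_majorant_def algebra_simps)
  finally show ?thesis .
qed

lemma sum_norm_cosh_increments_le:
  assumes "admissible lam \<mu>" and "c \<in> {0..1}"
  shows "(\<Sum>i<lam. cmod (cosh (t * of_real (mu0 \<mu> (Suc i) - c)) - cosh (t * of_real (mu0 \<mu> i - c))))
         \<le> cmod t * exp (cmod t)"
proof (rule sum_norm_le_of_increments[where m = "mu0 \<mu>"])
  fix i
  assume "i < lam"
  then have "mu0 \<mu> i \<in> {0..1}" "mu0 \<mu> (Suc i) \<in> {0..1}" "mu0 \<mu> i \<le> mu0 \<mu> (Suc i)"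
    using admissible_mu0_range[OF assms(1)] admissible_mu0_mono[OF assms(1)] by auto
  then show "cmod (cosh (t * of_real (mu0 \<mu> (Suc i) - c)) - cosh (t * of_real (mu0 \<mu> i - c)))
      \<le> cmod t * exp (cmod t) * (mu0 \<mu> (Suc i) - mu0 \<mu> i)"
    using cosh_scaled_lipschitz[of "mu0 \<mu> (Suc i) - c" "mu0 \<mu> i - c" t] assms(2)
    by (auto simp del: of_real_diff)
qed (use admissible_mu0_range[OF assms(1)] in auto)

lemma norm_xi_le:
  assumes "admissible lam \<mu>"
  shows "cmod (xi g lam \<mu> t) \<le> 2 * g\<^sup>2 * xi_majorant t"
proof -
  define A where "A \<beta> = cosh (t * of_real (mu0 \<mu> (\<beta> + 1) - 1)) - cosh (t * of_real (mu0 \<mu> \<beta> - 1))" for \<beta>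
  define B where "B \<alpha> = cosh (t * of_real (mu0 \<mu> \<alpha>)) - cosh (t * of_real (mu0 \<mu> (\<alpha> + 1)))" for \<alpha>
  define P where "P = {(\<alpha>, \<beta>). \<alpha> < \<beta> \<and> \<beta> \<le> lam - 1 \<and> odd (\<beta> - \<alpha>)}"
  let ?S = "\<Sum>\<gamma>=0..lam. (-1)^\<gamma> * cosh (t * of_real (mu0 \<mu> \<gamma>))"
  let ?X1 = "of_real (8 * g\<^sup>2) / sinh t * (sinh (t * of_real (1 - mu0 \<mu> lam) / 2))\<^sup>2 * (-1)^lam * ?S"
  let ?X2 = "of_real (4 * g\<^sup>2) / sinh t * (\<Sum>(\<alpha>, \<beta>)\<in>P. A \<beta> * B \<alpha>)"
  have alternating_sum: "cmod ?S \<le> cmod t * exp (cmod t) + exp (cmod t)"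
  proof (rule norm_alternating_sum_le[where m = "mu0 \<mu>" and f = "\<lambda>a. cosh (t * of_real a)"])
    show "cmod (cosh (t * of_real a) - cosh (t * of_real b)) \<le> cmod t * exp (cmod t) * \<bar>a - b\<bar>"
      if "a \<in> {0..1}" "b \<in> {0..1}" for a b
      using cosh_scaled_lipschitz[of a b t] that by simp
    show "cmod (cosh (t * of_real a)) \<le> exp (cmod t)" if "a \<in> {0..1}" for a
      using norm_cosh_scaled_le[of "of_real a" t] that by simp
  qed (use admissible_mu0_mono[OF assms] admissible_mu0_range[OF assms] in auto)
  have sinh_factor: "cmod (sinh (t * of_real (1 - mu0 \<mu> lam) / 2)) \<le> exp (cmod t)"
  proof -
    have "cmod (of_real ((1 - mu0 \<mu> lam) / 2) :: complex) \<le> 1"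
      using admissible_mu0_range[OF assms, of lam] by (auto simp del: of_real_diff of_real_divide)
    then show ?thesis
      using norm_sinh_scaled_le[of "of_real ((1 - mu0 \<mu> lam) / 2)" t] by simp
  qed
  have "cmod ?X1 = 8 * g\<^sup>2 / cmod (sinh t) * (cmod (sinh (t * of_real (1 - mu0 \<mu> lam) / 2)))\<^sup>2 * cmod ?S"
    by (simp add: norm_mult norm_divide norm_power)
  also have "\<dots> \<le> 8 * g\<^sup>2 / cmod (sinh t) * (exp (cmod t))\<^sup>2 * (cmod t * exp (cmod t) + exp (cmod t))"
    by (intro mult_mono mult_left_mono power_mono sinh_factor alternating_sum) auto
  finally have X1: "cmod ?X1 \<le> 8 * g\<^sup>2 / cmod (sinh t) * (exp (cmod t))\<^sup>2 * (cmod t * exp (cmod t) + exp (cmod t))" .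
  have "P \<subseteq> {..<lam} \<times> {..<lam}"
    by (auto simp: P_def)
  then have "cmod (\<Sum>(\<alpha>, \<beta>)\<in>P. A \<beta> * B \<alpha>) \<le> (\<Sum>\<beta><lam. cmod (A \<beta>)) * (\<Sum>\<alpha><lam. cmod (B \<alpha>))"
    by (rule norm_sum_pairs_le)
  also have "\<dots> \<le> (cmod t * exp (cmod t)) * (cmod t * exp (cmod t))"
    using sum_norm_cosh_increments_le[OF assms, of 1 t] sum_norm_cosh_increments_le[OF assms, of 0 t]
    by (intro mult_mono) (simp_all add: A_def B_def norm_minus_commute sum_nonneg)
  finally have double_sum: "cmod (\<Sum>(\<alpha>, \<beta>)\<in>P. A \<beta> * B \<alpha>) \<le> (cmod t * exp (cmod t))\<^sup>2"
    by (simp add: power2_eq_square)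
  have "cmod ?X2 = 4 * g\<^sup>2 / cmod (sinh t) * cmod (\<Sum>(\<alpha>, \<beta>)\<in>P. A \<beta> * B \<alpha>)"
    by (simp add: norm_mult norm_divide norm_power)
  also have "\<dots> \<le> 4 * g\<^sup>2 / cmod (sinh t) * (cmod t * exp (cmod t))\<^sup>2"
    by (intro mult_left_mono double_sum) auto
  finally have X2: "cmod ?X2 \<le> 4 * g\<^sup>2 / cmod (sinh t) * (cmod t * exp (cmod t))\<^sup>2" .
  have "xi g lam \<mu> t = - (?X1 + ?X2)"
    unfolding xi_def A_def B_def P_def by simp
  then have "cmod (xi g lam \<mu> t) = cmod (?X1 + ?X2)"
    by (simp only: norm_minus_cancel)
  also have "\<dots> \<le> cmod ?X1 + cmod ?X2"
    by (rule norm_triangle_ineq)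
  also have "\<dots> \<le> 2 * g\<^sup>2 * xi_majorant t"
    using X1 X2 by (simp add: xi_majorant_def algebra_simps add_divide_distrib)
  finally show ?thesis .
qed

lemma continuous_on_majorants:
  "continuous_on Rstar (theta_majorant x y)" "continuous_on Rstar psi_majorant"
  "continuous_on Rstar xi_majorant"
  unfolding theta_majorant_def psi_majorant_def xi_majorant_def
  using sinh_nonzero_on_Rstar sinh_half_nonzero_on_Rstar by (auto intro!: continuous_intros)

lemma bdd_on_compacts_if_continuous_on:
  assumes "continuous_on Rstar f"
  shows "bdd_on_compacts f"
  unfolding bdd_on_compacts_def
proof (intro allI impI)
  fix K
  assume "compact K \<and> K \<subseteq> Rstar"
  then have "compact (f ` K)"
    using compact_continuous_image continuous_on_subset assms by blast
  then obtain B where "\<forall>z\<in>f ` K. norm z \<le> B"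
    using compact_imp_bounded bounded_iff by metis
  then show "\<exists>B. \<forall>t\<in>K. \<bar>f t\<bar> \<le> B"
    by auto
qed

lemma norm_scaled_by_inverse_denominator:
  assumes "t \<in> Rstar"
  shows "cmod (of_real c / (1 - exp (-2 * t))) * (cmod (1 - exp (-2 * t)) * B) = \<bar>c\<bar> * B"
  using one_minus_exp_neg_double_nonzero_on_Rstar[OF assms] by (simp add: norm_divide)

theorem mainTheorem8:
  fixes g :: real
  shows "\<exists>(C1 :: real \<Rightarrow> real \<Rightarrow> complex \<Rightarrow> real) (C2 :: complex \<Rightarrow> real) (C3 :: complex \<Rightarrow> real).
     (\<forall>x y t. t \<in> Rstar \<longrightarrow> C1 x y t \<ge> 0) \<and> (\<forall>t\<in>Rstar. C2 t \<ge> 0 \<and> C3 t \<ge> 0) \<and>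
     (\<forall>x y. bdd_on_compacts (C1 x y)) \<and> bdd_on_compacts C2 \<and> bdd_on_compacts C3 \<and>
     (\<forall>(lam::nat) \<mu> t x y. lam \<ge> 1 \<longrightarrow> t \<in> Rstar \<longrightarrow> admissible lam \<mu> \<longrightarrow>
        cmod (theta g lam x y \<mu> t) \<le> cmod (of_real (sqrt 2 * g) / (1 - exp (-2 * t))) * C1 x y t \<and>
        cmod (psi_minus g lam \<mu> t) \<le> cmod (of_real (2 * g^2) / (1 - exp (-2 * t))) * C2 t \<and>
        cmod (psi_plus g lam \<mu> t) \<le> cmod (of_real (2 * g^2) / (1 - exp (-2 * t))) * C2 t \<and>
        cmod (xi g lam \<mu> t) \<le> cmod (of_real (2 * g^2) / (1 - exp (-2 * t))) * C3 t * real lam)"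
proof -
  define C1 where "C1 x y t = cmod (1 - exp (-2 * t)) * theta_majorant x y t" for x y t
  define C2 where "C2 t = cmod (1 - exp (-2 * t)) * psi_majorant t" for t
  define C3 where "C3 t = cmod (1 - exp (-2 * t)) * xi_majorant t" for t
  have "bdd_on_compacts (C1 x y)" "bdd_on_compacts C2" "bdd_on_compacts C3" for x y
    unfolding C1_def C2_def C3_def
    by (intro bdd_on_compacts_if_continuous_on continuous_intros continuous_on_majorants)+
  moreover have "C1 x y t \<ge> 0" "C2 t \<ge> 0" "C3 t \<ge> 0" for x y t
    by (simp_all add: C1_def C2_def C3_def theta_majorant_def psi_majorant_def xi_majorant_def)
  moreover have
    "cmod (theta g lam x y \<mu> t) \<le> cmod (of_real (sqrt 2 * g) / (1 - exp (-2 * t))) * C1 x y t \<and>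
     cmod (psi_minus g lam \<mu> t) \<le> cmod (of_real (2 * g^2) / (1 - exp (-2 * t))) * C2 t \<and>
     cmod (psi_plus g lam \<mu> t) \<le> cmod (of_real (2 * g^2) / (1 - exp (-2 * t))) * C2 t \<and>
     cmod (xi g lam \<mu> t) \<le> cmod (of_real (2 * g^2) / (1 - exp (-2 * t))) * C3 t * real lam"
    if "1 \<le> lam" "t \<in> Rstar" "admissible lam \<mu>" for lam \<mu> t x y
  proof -
    have "0 \<le> 2 * g\<^sup>2 * xi_majorant t"
      by (simp add: xi_majorant_def)
    then have "2 * g\<^sup>2 * xi_majorant t \<le> 2 * g\<^sup>2 * xi_majorant t * real lam"
      using mult_left_mono[of 1 "real lam"] \<open>1 \<le> lam\<close> by simp
    with norm_xi_le[OF \<open>admissible lam \<mu>\<close>]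
    have "cmod (xi g lam \<mu> t) \<le> 2 * g\<^sup>2 * xi_majorant t * real lam"
      by (rule order_trans)
    then show ?thesis
      unfolding C1_def C2_def C3_def norm_scaled_by_inverse_denominator[OF \<open>t \<in> Rstar\<close>]
      using norm_theta_le norm_psi_minus_le norm_psi_plus_le \<open>admissible lam \<mu>\<close> by simp
  qed
  ultimately show ?thesis
    by blast
qed

end
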